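(* Let $0\le\alpha\le\tfrac12$, let $X$ be uniformly distributed on $\{-1,1\}^n$, and let $Y_i=X_iZ_i$ for $i=1,\dots,n$, where $Z_1,\dots,Z_n$ are i.i.d., independent of $X$, with $\Pr(Z_i=-1)=\alpha$, $\Pr(Z_i=1)=1-\alpha$. For any balanced Boolean function $f:\{-1,1\}^n\to\{-1,1\}$ (i.e., $\Pr(f(X)=-1)=\tfrac12$), any integer $t\ge1$, and any $\alpha$ with $\tfrac12\left(1-\tfrac{1}{\sqrt{2t-1}}\right)\le\alpha\le\tfrac12$, \[ I(f(X);Y)\le \sum_{k=1}^{t-1}\frac{\log(e)}{2k(2k-1)}(2k-1)^{k}(1-2\alpha)^{2k}+\left(1-\sum_{k=1}^{t-1}\frac{\log(e)}{2k(2k-1)}\right)(2t-1)^{t}(1-2\alpha)^{2t}. \]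
   Context: $I(\cdot;\cdot)$ denotes mutual information; all logarithms are to base $2$. *)

theory Defs
  imports Complex_Main
begin

definition cube :: "nat \<Rightarrow> int list set" where
  "cube n = {xs. length xs = n \<and> set xs \<subseteq> {-1, 1}}"

text \<open>Joint pmf of (X,Y): X uniform on the cube, Y_i = X_i Z_i with
  Pr(Z_i = -1) = alpha, Pr(Z_i = 1) = 1 - alpha, all independent.\<close>
definition pXY :: "real \<Rightarrow> nat \<Rightarrow> int list \<Rightarrow> int list \<Rightarrow> real" where
  "pXY \<alpha> n x y = (1 / 2 ^ n) * (\<Prod>i<n. if x ! i = y ! i then 1 - \<alpha> else \<alpha>)"

definition pFY :: "real \<Rightarrow> nat \<Rightarrow> (int list \<Rightarrow> int) \<Rightarrow> int \<Rightarrow> int list \<Rightarrow> real" where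
  "pFY \<alpha> n f b y = (\<Sum>x\<in>{x\<in>cube n. f x = b}. pXY \<alpha> n x y)"

definition pF :: "real \<Rightarrow> nat \<Rightarrow> (int list \<Rightarrow> int) \<Rightarrow> int \<Rightarrow> real" where
  "pF \<alpha> n f b = (\<Sum>y\<in>cube n. pFY \<alpha> n f b y)"

definition pY :: "real \<Rightarrow> nat \<Rightarrow> (int list \<Rightarrow> int) \<Rightarrow> int list \<Rightarrow> real" where
  "pY \<alpha> n f y = (\<Sum>b\<in>{-1, 1}. pFY \<alpha> n f b y)"

definition MI_fY :: "real \<Rightarrow> nat \<Rightarrow> (int list \<Rightarrow> int) \<Rightarrow> real" where
  "MI_fY \<alpha> n f = (\<Sum>b\<in>{-1, 1}. \<Sum>y\<in>cube n.
      (if pFY \<alpha> n f b y = 0 then 0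
       else pFY \<alpha> n f b y * log 2 (pFY \<alpha> n f b y / (pF \<alpha> n f b * pY \<alpha> n f y))))"

end

theory Submission
  imports Defs "HOL-Analysis.Analysis"
begin

text \<open>Let \<open>g = T\<^sub>r f\<close> with \<open>r = 1 - 2\<alpha>\<close>, where \<open>T\<^sub>r\<close> is the noise operator, so that
  \<open>g(y) = E(f(X) | Y = y)\<close>. Since \<open>f\<close> is balanced, \<open>I(f(X);Y)\<close> is the average over \<open>y\<close> of
  \<open>1 - h((1 + g(y))/2)\<close>, and this function of \<open>g\<close> has the power series
  \<open>\<Sum>k\<ge>1. g^(2k) log e / (2k(2k - 1))\<close> with nonnegative coefficients summing to \<open>1\<close>.
  Cutting the series after \<open>t - 1\<close> terms and bounding the rest by its \<open>g^(2t)\<close> term reduces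
  the claim to the moment bounds \<open>E g^(2k) \<le> ((2k - 1) r^2)^k\<close> for \<open>k \<le> t\<close>. These are a form of
  hypercontractivity, proved by induction on \<open>n\<close> from a two-point inequality and Minkowski's
  inequality; they need \<open>(2k - 1) r^2 \<le> 1\<close>, which is the hypothesis on \<open>\<alpha>\<close>.\<close>

lemma mem_cube: "x \<in> cube n \<longleftrightarrow> length x = n \<and> set x \<subseteq> {-1, 1}"
  by (simp add: cube_def)

lemma cube_0 [simp]: "cube 0 = {[]}"
  by (auto simp: cube_def)

lemma cube_Suc: "cube (Suc n) = Cons 1 ` cube n \<union> Cons (-1) ` cube n"
proof
  show "cube (Suc n) \<subseteq> Cons 1 ` cube n \<union> Cons (-1) ` cube n"
  proof
    fix x assume "x \<in> cube (Suc n)"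
    then obtain a xs where "x = a # xs" "xs \<in> cube n" "a \<in> {-1, 1}"
      unfolding cube_def by (cases x) auto
    then show "x \<in> Cons 1 ` cube n \<union> Cons (-1) ` cube n" by auto
  qed
qed (auto simp: cube_def)

lemma finite_cube [simp]: "finite (cube n)"
  by (induction n) (auto simp: cube_Suc)

lemma sum_cube_Suc:
  "(\<Sum>x\<in>cube (Suc n). h x) = (\<Sum>xs\<in>cube n. h (1 # xs) + h ((-1) # xs))"
proof -
  have "(\<Sum>x\<in>cube (Suc n). h x)
      = (\<Sum>x\<in>Cons 1 ` cube n. h x) + (\<Sum>x\<in>Cons (-1) ` cube n. h x)"
    unfolding cube_Suc by (rule sum.union_disjoint) auto
  then show ?thesis by (simp add: sum.reindex sum.distrib)
qed

lemma card_cube: "card (cube n) = 2 ^ n"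
proof (induction n)
  case (Suc n)
  have "card (cube (Suc n)) = (\<Sum>x\<in>cube (Suc n). 1)" by simp
  then show ?case unfolding sum_cube_Suc using Suc by simp
qed simp

text \<open>The transition probabilities of the binary symmetric channel with crossover
  probability \<open>(1 - r) / 2\<close>, taken coordinatewise.\<close>
fun noise_kernel :: "real \<Rightarrow> int list \<Rightarrow> int list \<Rightarrow> real" where
  "noise_kernel r (a # xs) (b # ys) = (1 + r * a * b) / 2 * noise_kernel r xs ys"
| "noise_kernel r _ _ = 1"

lemma noise_kernel_commute: "noise_kernel r x y = noise_kernel r y x"
  by (induction r x y rule: noise_kernel.induct) (simp_all add: mult.commute)

lemma noise_kernel_nonneg:
  assumes "\<bar>r\<bar> \<le> 1" "set x \<subseteq> {-1, 1}" "set y \<subseteq> {-1, 1}"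
  shows "0 \<le> noise_kernel r x y"
  using assms
proof (induction r x y rule: noise_kernel.induct)
  case (1 r a xs b ys)
  then have "\<bar>r * a * b\<bar> \<le> 1" by (auto simp: abs_mult)
  then show ?case using 1 by simp
qed simp_all

lemma sum_noise_kernel: "length x = n \<Longrightarrow> (\<Sum>y\<in>cube n. noise_kernel r x y) = 1"
proof (induction n arbitrary: x)
  case (Suc n)
  then obtain a xs where "x = a # xs" "length xs = n" by (cases x) auto
  then show ?case unfolding sum_cube_Suc using Suc.IH
    by (simp add: field_simps flip: sum_distrib_left sum.distrib)
qed simp

lemma sum_noise_kernel_left: "length y = n \<Longrightarrow> (\<Sum>x\<in>cube n. noise_kernel r x y) = 1"
  by (subst noise_kernel_commute) (rule sum_noise_kernel)

lemma pXY_eq_noise_kernel: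
  "x \<in> cube n \<Longrightarrow> y \<in> cube n \<Longrightarrow> pXY \<alpha> n x y = noise_kernel (1 - 2 * \<alpha>) x y / 2 ^ n"
proof (induction n arbitrary: x y)
  case (Suc n)
  then obtain a xs b ys where x: "x = a # xs" "y = b # ys" "xs \<in> cube n" "ys \<in> cube n"
    and ab: "a \<in> {-1, 1}" "b \<in> {-1, 1}"
    by (auto simp: cube_Suc)
  have "pXY \<alpha> (Suc n) x y = (if a = b then 1 - \<alpha> else \<alpha>) / 2 * pXY \<alpha> n xs ys"
    unfolding pXY_def prod.lessThan_Suc_shift x by simp
  then show ?case using Suc.IH[OF x(3,4)] ab unfolding x by (auto simp: field_simps)
qed (simp add: pXY_def)

definition noise_op :: "real \<Rightarrow> nat \<Rightarrow> (int list \<Rightarrow> real) \<Rightarrow> int list \<Rightarrow> real" where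
  "noise_op r n f y = (\<Sum>x\<in>cube n. noise_kernel r x y * f x)"

text \<open>\<open>f (a # xs) = even_part f xs + a * odd_part f xs\<close> for \<open>a = \<plusminus>1\<close>.\<close>
definition even_part :: "(int list \<Rightarrow> real) \<Rightarrow> int list \<Rightarrow> real" where
  "even_part f xs = (f (1 # xs) + f ((-1) # xs)) / 2"

definition odd_part :: "(int list \<Rightarrow> real) \<Rightarrow> int list \<Rightarrow> real" where
  "odd_part f xs = (f (1 # xs) - f ((-1) # xs)) / 2"

lemma noise_op_Cons:
  "noise_op r (Suc n) f (b # ys)
     = noise_op r n (even_part f) ys + r * b * noise_op r n (odd_part f) ys"
proof -
  have "noise_op r (Suc n) f (b # ys) = (\<Sum>xs\<in>cube n. noise_kernel r xs ys * even_part f xs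
      + r * b * (noise_kernel r xs ys * odd_part f xs))"
    unfolding noise_op_def sum_cube_Suc even_part_def odd_part_def
    by (intro sum.cong) (simp_all add: field_simps)
  then show ?thesis unfolding noise_op_def by (simp add: sum.distrib sum_distrib_left)
qed

lemma sum_noise_op: "(\<Sum>y\<in>cube n. noise_op r n f y) = (\<Sum>x\<in>cube n. f x)"
  unfolding noise_op_def
  by (subst sum.swap) (simp add: sum_distrib_right[symmetric] sum_noise_kernel mem_cube)

lemma abs_noise_op_le_1:
  assumes "\<bar>r\<bar> \<le> 1" "y \<in> cube n" "\<forall>x\<in>cube n. \<bar>f x\<bar> \<le> 1"
  shows "\<bar>noise_op r n f y\<bar> \<le> 1"
proof -
  have "\<bar>noise_op r n f y\<bar> \<le> (\<Sum>x\<in>cube n. \<bar>noise_kernel r x y * f x\<bar>)"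
    unfolding noise_op_def by (rule sum_abs)
  also have "\<dots> \<le> (\<Sum>x\<in>cube n. noise_kernel r x y)"
    using assms noise_kernel_nonneg[OF assms(1)]
    by (intro sum_mono) (auto simp: abs_mult mem_cube intro: mult_left_le)
  also have "\<dots> = 1"
    using assms(2) by (simp add: sum_noise_kernel_left mem_cube)
  finally show ?thesis .
qed

lemma Suc_times_choose_Suc: "Suc k * (n choose Suc k) = (n - k) * (n choose k)"
  using binomial_absorption[of k n] binomial_absorb_comp[of n k] by simp

lemma choose_even_le: "j \<le> k \<Longrightarrow> (2 * k choose (2 * j)) \<le> (k choose j) * (2 * k - 1) ^ j"
proof (induction j)
  case (Suc j)
  let ?D = "2 * k choose (2 * j)" and ?E = "(k choose j) * (2 * k - 1) ^ j"
  have lhs: "(2 * j + 1) * (2 * j + 2) * (2 * k choose (2 * Suc j))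
      = (2 * k - 2 * j) * (2 * k - 2 * j - 1) * ?D"
  proof -
    have "(2 * j + 1) * (2 * j + 2) * (2 * k choose (2 * Suc j))
        = Suc (2 * j) * (Suc (Suc (2 * j)) * (2 * k choose Suc (Suc (2 * j))))"
      by (simp add: algebra_simps)
    also have "\<dots> = (2 * k - Suc (2 * j)) * (Suc (2 * j) * (2 * k choose Suc (2 * j)))"
      by (subst Suc_times_choose_Suc[of "Suc (2 * j)"]) (rule mult.left_commute)
    also have "\<dots> = (2 * k - Suc (2 * j)) * ((2 * k - 2 * j) * ?D)"
      by (simp only: Suc_times_choose_Suc)
    finally show ?thesis by (simp add: mult_ac)
  qed
  have rhs: "(2 * j + 1) * (2 * j + 2) * ((k choose Suc j) * (2 * k - 1) ^ Suc j)
      = 2 * (k - j) * ((2 * j + 1) * (2 * k - 1)) * ?E"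
  proof -
    have shuffle: "(2 * j + 1) * (2 * j + 2) * (c * m ^ Suc j)
        = 2 * (2 * j + 1) * m * m ^ j * (Suc j * c)" for c m :: nat
      by (simp add: algebra_simps)
    show ?thesis
      unfolding shuffle[of "k choose Suc j" "2 * k - 1"] Suc_times_choose_Suc by (simp only: mult_ac)
  qed
  have "2 * k - 2 * j - 1 \<le> (2 * j + 1) * (2 * k - 1)"
    using mult_le_mono1[of 1 "2 * j + 1" "2 * k - 1"] by simp
  then have "(2 * k - 2 * j) * (2 * k - 2 * j - 1) \<le> 2 * (k - j) * ((2 * j + 1) * (2 * k - 1))"
    using mult_le_mono2 by (metis right_diff_distrib')
  moreover have "?D \<le> ?E" using Suc by simp
  ultimately have "(2 * j + 1) * (2 * j + 2) * (2 * k choose (2 * Suc j))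
      \<le> (2 * j + 1) * (2 * j + 2) * ((k choose Suc j) * (2 * k - 1) ^ Suc j)"
    unfolding lhs rhs by (rule mult_le_mono)
  moreover have "0 < (2 * j + 1) * (2 * j + 2)" by simp
  ultimately show ?case using nat_mult_le_cancel1 by blast
qed simp

lemma sum_atMost_even_odd:
  fixes k :: nat
  shows "(\<Sum>i\<le>2 * k. h i) = (\<Sum>j\<le>k. h (2 * j)) + (\<Sum>j<k. h (2 * j + 1))"
  by (induction k) (simp_all add: algebra_simps)

lemma two_point_even_moment_le:
  fixes a d :: real
  shows "(a + d) ^ (2 * k) + (a - d) ^ (2 * k) \<le> 2 * (a^2 + real (2 * k - 1) * d^2) ^ k"
proof -
  have "(a + d) ^ (2 * k) + (a - d) ^ (2 * k)
      = (\<Sum>i\<le>2 * k. real (2 * k choose i) * (d ^ i + (-d) ^ i) * a ^ (2 * k - i))"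
    using binomial_ring[of d a "2 * k"] binomial_ring[of "-d" a "2 * k"]
    by (simp add: algebra_simps sum.distrib)
  also have "\<dots> = (\<Sum>j\<le>k. real (2 * k choose (2 * j)) * (2 * (d^2) ^ j * (a^2) ^ (k - j)))"
    unfolding sum_atMost_even_odd
    by (simp add: power_mult diff_mult_distrib2[symmetric] mult.assoc)
  also have "\<dots> \<le> (\<Sum>j\<le>k. real ((k choose j) * (2 * k - 1) ^ j) * (2 * (d^2) ^ j * (a^2) ^ (k - j)))"
    using choose_even_le by (intro sum_mono mult_right_mono) (simp_all only: of_nat_le_iff atMost_iff, simp)
  also have "\<dots> = 2 * (\<Sum>j\<le>k. real (k choose j) * (real (2 * k - 1) * d^2) ^ j * (a^2) ^ (k - j))"
    by (simp add: sum_distrib_left algebra_simps power_mult_distrib)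
  also have "\<dots> = 2 * (a^2 + real (2 * k - 1) * d^2) ^ k"
    using binomial_ring[of "real (2 * k - 1) * d^2" "a^2" k] by (simp add: add.commute)
  finally show ?thesis .
qed

lemma power_convex_comb_le:
  fixes x y t :: real
  assumes "0 \<le> x" "0 \<le> y" "0 \<le> t" "t \<le> 1"
  shows "((1 - t) * x + t * y) ^ k \<le> (1 - t) * x ^ k + t * y ^ k"
proof -
  have "convex_on {0..} (\<lambda>x::real. x ^ k)"
    by (cases "even k") (auto intro: convex_power_odd convex_on_subset[OF convex_power_even])
  then show ?thesis using convex_onD[of "{0..}" _ t x y] assms by simp
qed

lemma sum_power_nonpos_imp_eq_0:
  fixes w :: "'a \<Rightarrow> real"
  assumes "finite I" "k \<ge> 1" "(\<Sum>i\<in>I. w i ^ k) \<le> 0" "\<forall>i\<in>I. 0 \<le> w i" "i \<in> I"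
  shows "w i = 0"
proof -
  have "0 \<le> (\<Sum>i\<in>I. w i ^ k)" using assms(4) by (intro sum_nonneg) simp
  with assms(3) have "(\<Sum>i\<in>I. w i ^ k) = 0" by linarith
  then have "w i ^ k = 0" using assms(1,4,5) by (simp add: sum_nonneg_eq_0_iff)
  then show ?thesis using assms(2) by simp
qed

text \<open>Minkowski's inequality in \<open>\<ell>\<^sup>k\<close>, for bounds on the \<open>k\<close>-th power sums.\<close>
lemma sum_power_add_le:
  fixes u v :: "'a \<Rightarrow> real"
  assumes I: "finite I" and k: "k \<ge> 1"
    and uv: "\<forall>i\<in>I. 0 \<le> u i" "\<forall>i\<in>I. 0 \<le> v i" and AB: "0 \<le> A" "0 \<le> B"
    and hu: "(\<Sum>i\<in>I. u i ^ k) \<le> N * A ^ k" and hv: "(\<Sum>i\<in>I. v i ^ k) \<le> N * B ^ k"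
  shows "(\<Sum>i\<in>I. (u i + v i) ^ k) \<le> N * (A + B) ^ k"
proof (cases "A = 0 \<or> B = 0")
  case True
  then show ?thesis
  proof
    assume "A = 0"
    then have "\<forall>i\<in>I. u i = 0" using sum_power_nonpos_imp_eq_0[OF I k _ uv(1)] hu k by (auto simp: power_0_left)
    then show ?thesis using hv \<open>A = 0\<close> by simp
  next
    assume "B = 0"
    then have "\<forall>i\<in>I. v i = 0" using sum_power_nonpos_imp_eq_0[OF I k _ uv(2)] hv k by (auto simp: power_0_left)
    then show ?thesis using hu \<open>B = 0\<close> by simp
  qed
next
  case False
  then have A: "A > 0" and B: "B > 0" using AB by auto
  define t where "t = B / (A + B)"
  have t: "0 \<le> t" "t \<le> 1" "1 - t = A / (A + B)" using A B by (auto simp: t_def field_simps)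
  have "(u i + v i) ^ k \<le> (A + B) ^ k * ((1 - t) * (u i / A) ^ k + t * (v i / B) ^ k)"
    if "i \<in> I" for i
  proof -
    have "(1 - t) * (u i / A) + t * (v i / B) = (u i + v i) / (A + B)"
      using A B unfolding t(3) unfolding t_def by (simp add: add_divide_distrib)
    then have "u i + v i = (A + B) * ((1 - t) * (u i / A) + t * (v i / B))"
      using A B by simp
    then have "(u i + v i) ^ k = (A + B) ^ k * ((1 - t) * (u i / A) + t * (v i / B)) ^ k"
      by (simp add: power_mult_distrib)
    moreover have "((1 - t) * (u i / A) + t * (v i / B)) ^ k \<le> (1 - t) * (u i / A) ^ k + t * (v i / B) ^ k"
      using uv that A B t by (intro power_convex_comb_le) auto
    ultimately show ?thesis
      using A B by (simp add: mult_left_mono)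
  qed
  then have "(\<Sum>i\<in>I. (u i + v i) ^ k)
      \<le> (\<Sum>i\<in>I. (A + B) ^ k * ((1 - t) * (u i / A) ^ k + t * (v i / B) ^ k))"
    by (rule sum_mono)
  also have "\<dots> = (A + B) ^ k
      * ((1 - t) * ((\<Sum>i\<in>I. u i ^ k) / A ^ k) + t * ((\<Sum>i\<in>I. v i ^ k) / B ^ k))"
    by (simp add: sum.distrib power_divide flip: sum_distrib_left sum_divide_distrib)
  also have "\<dots> \<le> (A + B) ^ k * ((1 - t) * N + t * N)"
  proof -
    have "(\<Sum>i\<in>I. u i ^ k) / A ^ k \<le> N" "(\<Sum>i\<in>I. v i ^ k) / B ^ k \<le> N"
      using hu hv A B by (simp_all add: divide_le_eq mult.commute)
    then show ?thesis
      using A B t by (intro mult_left_mono add_mono) simp_all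
  qed
  finally show ?thesis by (simp add: algebra_simps)
qed

definition cube_mean :: "nat \<Rightarrow> (int list \<Rightarrow> real) \<Rightarrow> real" where
  "cube_mean n f = (\<Sum>x\<in>cube n. f x) / 2 ^ n"

definition cube_sq_mean :: "nat \<Rightarrow> (int list \<Rightarrow> real) \<Rightarrow> real" where
  "cube_sq_mean n f = (\<Sum>x\<in>cube n. (f x)^2) / 2 ^ n"

lemma cube_mean_sq_le: "(cube_mean n f)^2 \<le> cube_sq_mean n f"
proof -
  have "(\<Sum>x\<in>cube n. f x * 1)^2 \<le> (\<Sum>x\<in>cube n. (f x)^2) * (\<Sum>x\<in>cube n. 1^2)"
    by (rule Cauchy_Schwarz_ineq_sum)
  then show ?thesis
    by (simp add: cube_mean_def cube_sq_mean_def card_cube power_divide field_simps power2_eq_square)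
qed

lemma cube_mean_Suc: "cube_mean (Suc n) f = cube_mean n (even_part f)"
  unfolding cube_mean_def sum_cube_Suc even_part_def
  by (simp add: sum_divide_distrib[symmetric] field_simps)

lemma cube_sq_mean_Suc:
  "cube_sq_mean (Suc n) f = cube_sq_mean n (even_part f) + cube_sq_mean n (odd_part f)"
proof -
  have "f (1 # xs)^2 + f ((-1) # xs)^2 = 2 * ((even_part f xs)^2 + (odd_part f xs)^2)" for xs
    by (simp add: even_part_def odd_part_def power2_eq_square field_simps)
  then show ?thesis
    unfolding cube_sq_mean_def sum_cube_Suc
    by (simp add: sum.distrib add_divide_distrib flip: sum_distrib_left)
qed

text \<open>\<open>(E f)^2 + c Var f\<close>, the quantity for which the \<open>(2, 2k)\<close>-hypercontractive moment
  bound below survives induction on the dimension.\<close>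
definition energy :: "real \<Rightarrow> nat \<Rightarrow> (int list \<Rightarrow> real) \<Rightarrow> real" where
  "energy c n f = (cube_mean n f)^2 + c * (cube_sq_mean n f - (cube_mean n f)^2)"

lemma energy_nonneg: "0 \<le> c \<Longrightarrow> 0 \<le> energy c n f"
  unfolding energy_def using cube_mean_sq_le[of n f] by simp

lemma energy_parts_le:
  assumes "0 \<le> c" "c \<le> 1"
  shows "energy c n (even_part f) + c * energy c n (odd_part f) \<le> energy c (Suc n) f"
proof -
  have "0 \<le> c * (1 - c) * (cube_sq_mean n (odd_part f) - (cube_mean n (odd_part f))^2)"
    using assms cube_mean_sq_le[of n "odd_part f"] by simp
  then show ?thesis
    unfolding energy_def cube_mean_Suc cube_sq_mean_Suc by (simp add: algebra_simps)
qed

lemma sum_noise_op_power_le: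
  fixes r :: real and k :: nat
  defines "c \<equiv> real (2 * k - 1) * r^2"
  assumes "k \<ge> 1" "c \<le> 1"
  shows "(\<Sum>y\<in>cube n. (noise_op r n f y) ^ (2 * k)) \<le> 2 ^ n * (energy c n f) ^ k"
proof (induction n arbitrary: f)
  case 0
  show ?case by (simp add: noise_op_def energy_def cube_mean_def cube_sq_mean_def power_mult)
next
  case (Suc n)
  have c: "0 \<le> c" unfolding c_def by simp
  define a where "a = noise_op r n (even_part f)"
  define b where "b = noise_op r n (odd_part f)"
  have "(\<Sum>y\<in>cube (Suc n). (noise_op r (Suc n) f y) ^ (2 * k))
      = (\<Sum>ys\<in>cube n. (a ys + r * b ys) ^ (2 * k) + (a ys - r * b ys) ^ (2 * k))"
    unfolding sum_cube_Suc noise_op_Cons a_def b_def by simp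
  also have "\<dots> \<le> (\<Sum>ys\<in>cube n. 2 * ((a ys)^2 + c * (b ys)^2) ^ k)"
  proof (rule sum_mono)
    fix ys
    show "(a ys + r * b ys) ^ (2 * k) + (a ys - r * b ys) ^ (2 * k) \<le> 2 * ((a ys)^2 + c * (b ys)^2) ^ k"
      using two_point_even_moment_le[of "a ys" "r * b ys" k]
      by (simp add: c_def power_mult_distrib mult.assoc)
  qed
  also have "\<dots> \<le> 2 * (2 ^ n * (energy c n (even_part f) + c * energy c n (odd_part f)) ^ k)"
  proof -
    have "(\<Sum>ys\<in>cube n. ((a ys)^2) ^ k) \<le> 2 ^ n * (energy c n (even_part f)) ^ k"
      using Suc.IH[of "even_part f"] unfolding a_def by (simp add: power_mult)
    moreover have "(\<Sum>ys\<in>cube n. (c * (b ys)^2) ^ k) = c ^ k * (\<Sum>ys\<in>cube n. (b ys) ^ (2 * k))"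
      by (simp add: power_mult_distrib sum_distrib_left power_mult)
    moreover have "c ^ k * (\<Sum>ys\<in>cube n. (b ys) ^ (2 * k)) \<le> 2 ^ n * (c * energy c n (odd_part f)) ^ k"
      using mult_left_mono[OF Suc.IH[of "odd_part f"], of "c ^ k"] c unfolding b_def
      by (simp add: power_mult_distrib mult_ac)
    ultimately show ?thesis
      using sum_power_add_le[OF finite_cube \<open>k \<ge> 1\<close>] energy_nonneg[OF c] c
      by (simp add: sum_distrib_left[symmetric])
  qed
  also have "\<dots> \<le> 2 ^ Suc n * (energy c (Suc n) f) ^ k"
    using energy_parts_le[OF c \<open>c \<le> 1\<close>, of n f] energy_nonneg[OF c] c
    by (simp add: power_mono)
  finally show ?case .
qed

lemma ln_one_plus_minus_ln_one_minus_sums: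
  fixes g :: real
  assumes "\<bar>g\<bar> < 1"
  shows "(\<lambda>m. 2 * g ^ (2 * m + 1) / (2 * real m + 1)) sums (ln (1 + g) - ln (1 - g))"
proof -
  define F where "F n = - ((-g) ^ n) / real n - - (g ^ n) / real n" for n
  have "F sums (ln (1 + g) - ln (1 - g))"
    unfolding F_def using ln_series'[of g] ln_series'[of "-g"] assms by (intro sums_diff) simp_all
  then have "(\<lambda>m. \<Sum>n\<in>{m * 2..<m * 2 + 2}. F n) sums (ln (1 + g) - ln (1 - g))"
    by (rule sums_group) simp
  moreover have "(\<Sum>n\<in>{m * 2..<m * 2 + 2}. F n) = 2 * g ^ (2 * m + 1) / (2 * real m + 1)" for m
  proof -
    have "{m * 2..<m * 2 + 2} = {2 * m, 2 * m + 1}" by auto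
    moreover have "F (2 * m) = 0" "F (2 * m + 1) = 2 * g ^ (2 * m + 1) / (2 * real m + 1)"
      unfolding F_def by (simp_all add: power_minus' add_divide_distrib[symmetric])
    ultimately show ?thesis by simp
  qed
  ultimately show ?thesis by simp
qed

lemma ln_one_minus_sq_sums:
  fixes g :: real
  assumes "\<bar>g\<bar> < 1"
  shows "(\<lambda>m. - ((g^2) ^ Suc m) / real (Suc m)) sums ln (1 - g^2)"
proof -
  have "\<bar>- (g^2)\<bar> < 1" using assms by (simp add: abs_square_less_1)
  from ln_series'[OF this] have "(\<lambda>n. - ((g^2) ^ n) / real n) sums ln (1 - g^2)" by simp
  then show ?thesis by (subst sums_Suc_iff) simp
qed

lemma entropy_ln_sums:
  fixes g :: real
  assumes "\<bar>g\<bar> < 1"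
  shows "(\<lambda>m. (g^2) ^ Suc m / (real (Suc m) * (2 * real m + 1)))
           sums ((1 + g) * ln (1 + g) + (1 - g) * ln (1 - g))"
proof -
  have "(\<lambda>m. - ((g^2) ^ Suc m) / real (Suc m) + g * (2 * g ^ (2 * m + 1) / (2 * real m + 1)))
      sums (ln (1 - g^2) + g * (ln (1 + g) - ln (1 - g)))"
    using assms by (intro sums_add sums_mult ln_one_minus_sq_sums ln_one_plus_minus_ln_one_minus_sums)
  moreover have "ln (1 - g^2) = ln (1 + g) + ln (1 - g)"
  proof -
    have "1 - g^2 = (1 + g) * (1 - g)" by (simp add: power2_eq_square algebra_simps)
    moreover have "0 < 1 + g" "0 < 1 - g" using assms by auto
    ultimately show ?thesis by (simp add: ln_mult)
  qed
  moreover have "- ((g^2) ^ Suc m) / real (Suc m) + g * (2 * g ^ (2 * m + 1) / (2 * real m + 1))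
      = (g^2) ^ Suc m / (real (Suc m) * (2 * real m + 1))" for m
  proof -
    have y: "g * g ^ (2 * m + 1) = (g^2) ^ Suc m" by (subst power_mult[symmetric]) simp
    have "- y / real (Suc m) + 2 * y / (2 * real m + 1) = y / (real (Suc m) * (2 * real m + 1))"
      for y :: real
      by (simp add: field_simps)
    from this[of "(g^2) ^ Suc m"] show ?thesis unfolding y[symmetric] by (simp add: ac_simps)
  qed
  ultimately show ?thesis by (simp add: algebra_simps)
qed

text \<open>\<open>entropy_deficit g = 1 - h((1 + g) / 2)\<close> for the binary entropy \<open>h\<close> in bits.\<close>
definition entropy_deficit :: "real \<Rightarrow> real" where
  "entropy_deficit g = ((1 + g) * log 2 (1 + g) + (1 - g) * log 2 (1 - g)) / 2"

definition entropy_coeff :: "nat \<Rightarrow> real" where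
  "entropy_coeff k = log 2 (exp 1) / (2 * real k * (2 * real k - 1))"

lemma entropy_coeff_nonneg: "0 \<le> entropy_coeff k"
  by (cases k) (simp_all add: entropy_coeff_def)

lemma entropy_coeff_sums: "(\<lambda>m. entropy_coeff (Suc m)) sums 1"
proof -
  have "(\<lambda>m. (inverse (real (2 * m + 1)) - inverse (real (2 * m + 2))) / ln 2) sums (ln 2 / ln 2)"
    by (intro sums_divide alternating_harmonic_series_sums')
  moreover have "(inverse (real (2 * m + 1)) - inverse (real (2 * m + 2))) / ln 2 = entropy_coeff (Suc m)"
    for m
    by (simp add: entropy_coeff_def log_def field_simps)
  ultimately show ?thesis by simp
qed

lemma entropy_deficit_sums:
  assumes "\<bar>g\<bar> < 1"
  shows "(\<lambda>m. entropy_coeff (Suc m) * (g^2) ^ Suc m) sums entropy_deficit g"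
proof -
  have "(\<lambda>m. (g^2) ^ Suc m / (real (Suc m) * (2 * real m + 1)) / (2 * ln 2))
      sums (((1 + g) * ln (1 + g) + (1 - g) * ln (1 - g)) / (2 * ln 2))"
    using assms by (intro sums_divide entropy_ln_sums)
  moreover have "(g^2) ^ Suc m / (real (Suc m) * (2 * real m + 1)) / (2 * ln 2)
      = entropy_coeff (Suc m) * (g^2) ^ Suc m" for m
    by (simp add: entropy_coeff_def log_def field_simps)
  moreover have "((1 + g) * ln (1 + g) + (1 - g) * ln (1 - g)) / (2 * ln 2) = entropy_deficit g"
    by (simp add: entropy_deficit_def log_def add_divide_distrib)
  ultimately show ?thesis by simp
qed

text \<open>The coefficients are nonnegative and sum to \<open>1\<close>, so the part of the series beyond
  degree \<open>2T\<close> is at most \<open>(1 - \<Sum>k=1..T. entropy_coeff k) g^(2(T+1))\<close>.\<close>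
lemma entropy_deficit_le:
  assumes "\<bar>g\<bar> \<le> 1"
  shows "entropy_deficit g \<le> (\<Sum>k=1..T. entropy_coeff k * g ^ (2 * k))
           + (1 - (\<Sum>k=1..T. entropy_coeff k)) * g ^ (2 * Suc T)"
proof (cases "\<bar>g\<bar> = 1")
  case True
  then have "g = 1 \<or> g = -1" by (auto simp: abs_if split: if_splits)
  then have "g ^ (2 * k) = 1" for k by (auto simp: power_mult)
  moreover have "entropy_deficit g = 1" using \<open>g = 1 \<or> g = -1\<close> by (auto simp: entropy_deficit_def)
  ultimately show ?thesis by (simp only:) simp
next
  case False
  let ?x = "g^2" and ?c = "\<lambda>m. entropy_coeff (Suc m)"
  have x: "0 \<le> ?x" "?x \<le> 1" using assms by (auto simp: abs_square_le_1)
  define h where "h m = (if m \<in> {..<T} then ?c m * (?x ^ Suc m - ?x ^ Suc T) else 0)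
                         + ?c m * ?x ^ Suc T" for m
  have h_sums: "h sums ((\<Sum>m\<in>{..<T}. ?c m * (?x ^ Suc m - ?x ^ Suc T)) + 1 * ?x ^ Suc T)"
    unfolding h_def by (intro sums_add sums_If_finite_set sums_mult2 entropy_coeff_sums) simp
  have le_h: "?c m * ?x ^ Suc m \<le> h m" for m
  proof (cases "m < T")
    case False
    then have "?x ^ Suc m \<le> ?x ^ Suc T" using x by (intro power_decreasing) simp_all
    then show ?thesis using False entropy_coeff_nonneg[of "Suc m"] by (simp add: h_def mult_left_mono)
  qed (simp add: h_def algebra_simps)
  have "\<bar>g\<bar> < 1" using False assms by simp
  from sums_le[OF le_h entropy_deficit_sums[OF this] h_sums]
  have "entropy_deficit g \<le> (\<Sum>m<T. ?c m * (?x ^ Suc m - ?x ^ Suc T)) + ?x ^ Suc T"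
    by simp
  also have "\<dots> = (\<Sum>k=1..T. entropy_coeff k * g ^ (2 * k))
      + (1 - (\<Sum>k=1..T. entropy_coeff k)) * g ^ (2 * Suc T)"
    by (simp add: sum.atLeast1_atMost_eq power_mult right_diff_distrib sum_subtractf
        sum_distrib_right left_diff_distrib power2_eq_square mult.assoc)
  finally show ?thesis .
qed

lemma entropy_coeff_sum_le_1: "(\<Sum>k=1..T. entropy_coeff k) \<le> 1"
  using sum_le_suminf[OF sums_summable[OF entropy_coeff_sums], of "{..<T}"]
    entropy_coeff_nonneg sums_unique[OF entropy_coeff_sums]
  by (simp add: sum.atLeast1_atMost_eq)

lemma sum_entropy_deficit_le:
  fixes g :: "'a \<Rightarrow> real"
  assumes "finite Y" "\<forall>y\<in>Y. \<bar>g y\<bar> \<le> 1"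
    and moments: "\<forall>k\<in>{1..Suc T}. (\<Sum>y\<in>Y. g y ^ (2 * k)) \<le> N * m k"
  shows "(\<Sum>y\<in>Y. entropy_deficit (g y))
    \<le> N * ((\<Sum>k=1..T. entropy_coeff k * m k) + (1 - (\<Sum>k=1..T. entropy_coeff k)) * m (Suc T))"
proof -
  let ?C = "\<Sum>k=1..T. entropy_coeff k"
  have "(\<Sum>y\<in>Y. entropy_deficit (g y))
      \<le> (\<Sum>y\<in>Y. (\<Sum>k=1..T. entropy_coeff k * g y ^ (2 * k)) + (1 - ?C) * g y ^ (2 * Suc T))"
    using assms(2) by (intro sum_mono entropy_deficit_le) simp
  also have "\<dots> = (\<Sum>k=1..T. entropy_coeff k * (\<Sum>y\<in>Y. g y ^ (2 * k)))
      + (1 - ?C) * (\<Sum>y\<in>Y. g y ^ (2 * Suc T))"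
    by (simp add: sum.distrib sum_distrib_left sum.swap[of _ Y])
  also have "\<dots> \<le> (\<Sum>k=1..T. entropy_coeff k * (N * m k)) + (1 - ?C) * (N * m (Suc T))"
  proof -
    have ms: "(\<Sum>y\<in>Y. g y ^ (2 * k)) \<le> N * m k" if "k \<in> {1..Suc T}" for k
      using moments that by blast
    then show ?thesis
    proof (intro add_mono sum_mono mult_left_mono)
      show "0 \<le> 1 - ?C" using entropy_coeff_sum_le_1[of T] by simp
      show "(\<Sum>y\<in>Y. g y ^ (2 * Suc T)) \<le> N * m (Suc T)" by (rule ms) simp
    qed (auto simp: entropy_coeff_nonneg)
  qed
  finally show ?thesis by (simp add: algebra_simps sum_distrib_left)
qed

lemma sum_balanced_eq_0:
  assumes "\<forall>x\<in>cube n. f x \<in> {-1, 1}"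
    and "real (card {x\<in>cube n. f x = -1}) / 2 ^ n = 1/2"
  shows "(\<Sum>x\<in>cube n. real_of_int (f x)) = 0"
proof -
  have "(\<Sum>x\<in>cube n. real_of_int (f x)) = (\<Sum>x\<in>cube n. 1 - 2 * (if f x = -1 then 1 else 0))"
    using assms(1) by (intro sum.cong) auto
  also have "\<dots> = real (card (cube n)) - 2 * real (card {x\<in>cube n. f x = -1})"
    by (simp add: sum_subtractf sum.inter_filter[symmetric] flip: sum_distrib_left)
  also have "\<dots> = 0" using assms(2) by (simp add: card_cube field_simps)
  finally show ?thesis .
qed

text \<open>For balanced \<open>f\<close> the energy of \<open>f\<close> is \<open>c\<close> itself.\<close>
lemma sum_noise_op_balanced_power_le:
  fixes f :: "int list \<Rightarrow> real"
  assumes "\<forall>x\<in>cube n. \<bar>f x\<bar> = 1" "(\<Sum>x\<in>cube n. f x) = 0"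
    and "k \<ge> 1" "(2 * real k - 1) * r^2 \<le> 1"
  shows "(\<Sum>y\<in>cube n. (noise_op r n f y) ^ (2 * k)) \<le> 2 ^ n * ((2 * real k - 1) ^ k * r ^ (2 * k))"
proof -
  have k: "real (2 * k - 1) = 2 * real k - 1" using assms(3) by (simp add: of_nat_diff)
  have "(f x)^2 = 1" if "x \<in> cube n" for x
    using assms(1) that by (metis power2_abs one_power2)
  then have "cube_sq_mean n f = 1"
    by (simp add: cube_sq_mean_def card_cube)
  then have "energy (real (2 * k - 1) * r^2) n f = (2 * real k - 1) * r^2"
    using assms(2) unfolding k by (simp add: energy_def cube_mean_def)
  then show ?thesis
    using sum_noise_op_power_le[of k r n f] assms(3,4)
    by (simp add: k power_mult_distrib power_mult)
qed

lemma pFY_eq_noise_op: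
  assumes "\<forall>x\<in>cube n. f x \<in> {-1, 1}" "y \<in> cube n" "b \<in> {-1, 1}"
  shows "pFY \<alpha> n f b y = (1 + b * noise_op (1 - 2 * \<alpha>) n (\<lambda>x. real_of_int (f x)) y) / (2 * 2 ^ n)"
proof -
  let ?K = "\<lambda>x. noise_kernel (1 - 2 * \<alpha>) x y"
  have "pFY \<alpha> n f b y = (\<Sum>x\<in>cube n. if f x = b then ?K x / 2 ^ n else 0)"
    unfolding pFY_def using assms(2)
    by (simp add: sum.inter_filter pXY_eq_noise_kernel cong: if_cong)
  also have "\<dots> = (\<Sum>x\<in>cube n. (?K x + b * (?K x * real_of_int (f x))) / (2 * 2 ^ n))"
    using assms(1,3) by (intro sum.cong) (auto simp: field_simps)
  also have "\<dots> = ((\<Sum>x\<in>cube n. ?K x) + b * noise_op (1 - 2 * \<alpha>) n (\<lambda>x. real_of_int (f x)) y)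
      / (2 * 2 ^ n)"
    unfolding noise_op_def by (simp add: sum.distrib sum_distrib_left flip: sum_divide_distrib)
  finally show ?thesis
    using assms(2) by (simp add: sum_noise_kernel_left mem_cube)
qed

text \<open>Both marginals are uniform, so the summand for \<open>(b, y)\<close> depends only on \<open>b g(y)\<close>.\<close>
lemma MI_fY_eq_sum_entropy_deficit:
  assumes f: "\<forall>x\<in>cube n. f x \<in> {-1, 1}"
    and balanced: "real (card {x\<in>cube n. f x = -1}) / 2 ^ n = 1/2"
  shows "MI_fY \<alpha> n f
    = (\<Sum>y\<in>cube n. entropy_deficit (noise_op (1 - 2 * \<alpha>) n (\<lambda>x. real_of_int (f x)) y)) / 2 ^ n"
proof -
  let ?g = "noise_op (1 - 2 * \<alpha>) n (\<lambda>x. real_of_int (f x))"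
  have pF: "pF \<alpha> n f b = 1/2" if "b \<in> {-1, 1}" for b
  proof -
    have "pF \<alpha> n f b = (\<Sum>y\<in>cube n. (1 + b * ?g y) / (2 * 2 ^ n))"
      unfolding pF_def using pFY_eq_noise_op[OF f _ that] by (intro sum.cong) auto
    also have "\<dots> = (real (card (cube n)) + b * (\<Sum>y\<in>cube n. ?g y)) / (2 * 2 ^ n)"
      by (simp add: sum.distrib sum_distrib_left flip: sum_divide_distrib)
    finally show ?thesis
      using sum_balanced_eq_0[OF f balanced] by (simp add: sum_noise_op card_cube)
  qed
  have pY: "pY \<alpha> n f y = 1 / 2 ^ n" if "y \<in> cube n" for y
    using pFY_eq_noise_op[OF f that, of "-1"] pFY_eq_noise_op[OF f that, of 1]
    by (simp add: pY_def add_divide_distrib[symmetric])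
  have summand: "(if pFY \<alpha> n f b y = 0 then 0
       else pFY \<alpha> n f b y * log 2 (pFY \<alpha> n f b y / (pF \<alpha> n f b * pY \<alpha> n f y)))
      = (1 + b * ?g y) / (2 * 2 ^ n) * log 2 (1 + b * ?g y)"
    if "y \<in> cube n" "b \<in> {-1, 1}" for b y
  proof -
    have "pFY \<alpha> n f b y / (pF \<alpha> n f b * pY \<alpha> n f y) = 1 + b * ?g y"
      unfolding pFY_eq_noise_op[OF f that] pF[OF that(2)] pY[OF that(1)] by (simp add: field_simps)
    then show ?thesis unfolding pFY_eq_noise_op[OF f that] by auto
  qed
  have "MI_fY \<alpha> n f = (\<Sum>b\<in>{-1, 1::int}. \<Sum>y\<in>cube n.
      (1 + b * ?g y) / (2 * 2 ^ n) * log 2 (1 + b * ?g y))"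
    unfolding MI_fY_def by (intro sum.cong refl) (simp add: summand)
  also have "\<dots> = (\<Sum>y\<in>cube n. (1 - ?g y) / (2 * 2 ^ n) * log 2 (1 - ?g y)
      + (1 + ?g y) / (2 * 2 ^ n) * log 2 (1 + ?g y))"
    by (simp add: sum.distrib)
  also have "\<dots> = (\<Sum>y\<in>cube n. entropy_deficit (?g y) / 2 ^ n)"
    by (intro sum.cong refl) (simp add: entropy_deficit_def field_simps)
  finally show ?thesis by (simp add: sum_divide_distrib)
qed

lemma mean_entropy_deficit_noise_op_le:
  fixes f :: "int list \<Rightarrow> real"
  assumes "\<forall>x\<in>cube n. \<bar>f x\<bar> = 1" "(\<Sum>x\<in>cube n. f x) = 0"
    and "\<bar>r\<bar> \<le> 1" "(2 * real (Suc T) - 1) * r^2 \<le> 1"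
  shows "(\<Sum>y\<in>cube n. entropy_deficit (noise_op r n f y)) / 2 ^ n
    \<le> (\<Sum>k=1..T. entropy_coeff k * ((2 * real k - 1) ^ k * r ^ (2 * k)))
      + (1 - (\<Sum>k=1..T. entropy_coeff k)) * ((2 * real (Suc T) - 1) ^ Suc T * r ^ (2 * Suc T))"
proof -
  have "(2 * real k - 1) * r^2 \<le> 1" if "k \<le> Suc T" for k
  proof -
    have "(2 * real k - 1) * r^2 \<le> (2 * real (Suc T) - 1) * r^2"
      using that by (intro mult_right_mono) simp_all
    then show ?thesis using assms(4) by linarith
  qed
  then have "\<forall>k\<in>{1..Suc T}. (\<Sum>y\<in>cube n. noise_op r n f y ^ (2 * k))
      \<le> 2 ^ n * ((2 * real k - 1) ^ k * r ^ (2 * k))"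
    using assms(1,2) by (auto intro!: sum_noise_op_balanced_power_le)
  moreover have "\<forall>y\<in>cube n. \<bar>noise_op r n f y\<bar> \<le> 1"
    using assms(1,3) by (auto intro!: abs_noise_op_le_1)
  ultimately show ?thesis
    using sum_entropy_deficit_le[OF finite_cube, where N = "2 ^ n"
        and m = "\<lambda>k. (2 * real k - 1) ^ k * r ^ (2 * k)" and T = T]
    by (simp add: pos_divide_le_eq mult.commute[of "2 ^ n"])
qed

theorem proposition3:
  fixes n t :: nat and \<alpha> :: real and f :: "int list \<Rightarrow> int"
  assumes "0 \<le> \<alpha>" and "\<alpha> \<le> 1/2"
    and "\<forall>x\<in>cube n. f x \<in> {-1, 1}"
    and "real (card {x\<in>cube n. f x = -1}) / 2 ^ n = 1/2"
    and "t \<ge> 1"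
    and "(1/2) * (1 - 1 / sqrt (2 * real t - 1)) \<le> \<alpha>"
  shows "MI_fY \<alpha> n f \<le>
    (\<Sum>k=1..t-1. log 2 (exp 1) / (2 * real k * (2 * real k - 1))
                  * (2 * real k - 1) ^ k * (1 - 2 * \<alpha>) ^ (2 * k))
    + (1 - (\<Sum>k=1..t-1. log 2 (exp 1) / (2 * real k * (2 * real k - 1))))
      * (2 * real t - 1) ^ t * (1 - 2 * \<alpha>) ^ (2 * t)"
proof -
  define r where "r = 1 - 2 * \<alpha>"
  obtain T where t: "t = Suc T" using assms(5) by (cases t) auto
  have r: "0 \<le> r" "r \<le> 1" using assms(1,2) by (auto simp: r_def)
  have "r \<le> 1 / sqrt (2 * real t - 1)" using assms(6) by (simp add: r_def)
  then have "(2 * real t - 1) * r^2 \<le> 1"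
    using r assms(5) power_mono[of r "1 / sqrt (2 * real t - 1)" 2]
    by (simp add: power_divide field_simps)
  moreover have "\<forall>x\<in>cube n. \<bar>real_of_int (f x)\<bar> = 1" using assms(3) by auto
  ultimately have "MI_fY \<alpha> n f
    \<le> (\<Sum>k=1..T. entropy_coeff k * ((2 * real k - 1) ^ k * r ^ (2 * k)))
      + (1 - (\<Sum>k=1..T. entropy_coeff k)) * ((2 * real t - 1) ^ t * r ^ (2 * t))"
    unfolding MI_fY_eq_sum_entropy_deficit[OF assms(3,4)] r_def[symmetric] t
    using r sum_balanced_eq_0[OF assms(3,4)] by (intro mean_entropy_deficit_noise_op_le) auto
  then show ?thesis by (simp add: t r_def entropy_coeff_def mult.assoc)
qed

end
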